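(* Let $m>3$ and $t\ge 0$ be integers, and let $n=2(mt+1)$. Then the set $[n]=\{1,\dots,n\}$ admits no $m$-good partition.
   Context: For integers $n>0$ and $m>1$, a partition of $[n]=\{1,\dots,n\}$ into nonempty parts is called $m$-good if every part has at most $m$ elements and the sum of the elements of every part is a power of $m$, i.e. equals $m^s$ for some integer $s\ge 0$ (so $m^0=1$ is allowed). *)

theory Defs
  imports Main
begin

definition is_partition_of :: "nat set set \<Rightarrow> nat set \<Rightarrow> bool" where
  "is_partition_of P A \<longleftrightarrow>
     \<Union>P = A \<and> (\<forall>B\<in>P. B \<noteq> {}) \<and>
     (\<forall>B\<in>P. \<forall>C\<in>P. B \<noteq> C \<longrightarrow> B \<inter> C = {})"

definition m_good :: "nat \<Rightarrow> nat \<Rightarrow> nat set set \<Rightarrow> bool" where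
  "m_good m n P \<longleftrightarrow> is_partition_of P {1..n} \<and>
     (\<forall>B\<in>P. card B \<le> m \<and> (\<exists>s::nat. \<Sum>B = m ^ s))"

end

theory Submission
  imports Defs
begin

text \<open>The total \<open>1 + \<dots> + n\<close> is a sum of powers of \<open>m\<close>, one per part. Since all elements
  are positive, only the part \<open>{1}\<close> can have sum \<open>m\<^sup>0 = 1\<close>, so the total is \<open>0\<close> or \<open>1\<close>
  modulo \<open>m\<close>. For \<open>n = 2(mt + 1)\<close> the total is \<open>(mt + 1)(2mt + 3) \<equiv> 3 (mod m)\<close>,
  which is impossible once \<open>m > 3\<close>.\<close>

lemma sum_eq_1_imp_eq_singleton_1:
  fixes B :: "nat set"
  assumes "finite B" "0 \<notin> B" "\<Sum>B = 1"
  shows "B = {1}"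
proof -
  have "x = 1" if "x \<in> B" for x
  proof -
    have "x \<le> \<Sum>B" using member_le_sum[of x B id] that assms(1) by simp
    then show "x = 1" using that assms(2,3) by (cases x) auto
  qed
  moreover have "B \<noteq> {}" using assms(3) by auto
  ultimately show ?thesis by auto
qed

lemma sum_partition:
  assumes "is_partition_of P A" "finite A"
  shows "sum f A = (\<Sum>B\<in>P. sum f B)"
proof -
  have "\<forall>B\<in>P. finite B"
    using assms finite_subset[of _ A] unfolding is_partition_of_def by auto
  with assms(1) show ?thesis
    using sum.Union_disjoint[of P f] unfolding is_partition_of_def by simp
qed

lemma m_good_part_dvd:
  assumes "m_good m n P" "B \<in> P" "B \<noteq> {1}"
  shows "m dvd \<Sum>B"
proof -
  have "B \<subseteq> {1..n}"
    using assms(1,2) unfolding m_good_def is_partition_of_def by auto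
  then have "finite B" "0 \<notin> B"
    using finite_subset[of B "{1..n}"] by auto
  obtain s where s: "\<Sum>B = m ^ s"
    using assms(1,2) unfolding m_good_def by blast
  with sum_eq_1_imp_eq_singleton_1[OF \<open>finite B\<close> \<open>0 \<notin> B\<close>] assms(3) have "s \<noteq> 0"
    by auto
  with s show ?thesis by (cases s) simp_all
qed

lemma m_good_sum_mod:
  assumes "m_good m n P"
  shows "(\<Sum>{1..n}) mod m \<in> {0, 1}"
proof -
  have partition: "is_partition_of P {1..n}"
    using assms unfolding m_good_def by blast
  have "finite P"
    using partition finite_subset[of P "Pow {1..n}"] unfolding is_partition_of_def by auto
  have total: "\<Sum>{1..n} = (\<Sum>B\<in>P. \<Sum>B)"
    using sum_partition[OF partition] by simp
  have rest: "m dvd (\<Sum>B\<in>P - {{1}}. \<Sum>B)"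
    by (rule dvd_sum) (use m_good_part_dvd[OF assms] in blast)
  show ?thesis
  proof (cases "{1} \<in> P")
    case True
    then have "\<Sum>{1..n} = 1 + (\<Sum>B\<in>P - {{1}}. \<Sum>B)"
      using total sum.remove[OF \<open>finite P\<close> True, of Sum] by simp
    with rest obtain k where "\<Sum>{1..n} = 1 + m * k"
      by (auto simp: dvd_def)
    then have "(\<Sum>{1..n}) mod m = 1 mod m"
      by (simp only: mod_mult_self2)
    then show ?thesis by (cases "m = 1") simp_all
  next
    case False
    then have "\<Sum>{1..n} = (\<Sum>B\<in>P - {{1}}. \<Sum>B)"
      using total by simp
    with rest show ?thesis by simp
  qed
qed

lemma sum_atLeast1_atMost_double: "\<Sum>{1..2 * k} = k * (2 * k + 1 :: nat)"
  using double_gauss_sum_from_Suc_0[of "2 * k", where ?'a = nat] by simp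

theorem mainTheorem1:
  fixes m t :: nat
  assumes "m > 3"
  shows "\<not> (\<exists>P. m_good m (2 * (m * t + 1)) P)"
proof
  have total: "\<Sum>{1..2 * (m * t + 1)} = 3 + m * (2 * m * t * t + 5 * t)"
    unfolding sum_atLeast1_atMost_double by (simp add: algebra_simps)
  from assms have "(\<Sum>{1..2 * (m * t + 1)}) mod m = 3"
    by (simp only: total mod_mult_self2) simp
  moreover assume "\<exists>P. m_good m (2 * (m * t + 1)) P"
  then have "(\<Sum>{1..2 * (m * t + 1)}) mod m \<in> {0, 1}"
    using m_good_sum_mod by blast
  ultimately show False
    by simp
qed

end
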